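(* Let $\rho\colon\mathrm{Isom}(\mathbf H^1_{\mathbb C})_o\to\mathrm{Isom}(\mathbf H^\infty_{\mathbb C})_o$ be a non-elementary representation with $\mathrm{Arg}(\rho)=\pi/2$. Then $\rho$ preserves a complex hyperbolic subspace of $\mathbf H^\infty_{\mathbb C}$ isometric to $\mathbf H^1_{\mathbb C}$.
   Context: $\mathcal H$: separable complex Hilbert space with strongly non-degenerate Hermitian form $B$ (linear in first variable) of signature $(1,\infty)$; $\mathbf H^\infty_{\mathbb C}=\{[v]:B(v,v)>0\}$, $\cosh d([v],[w])=|B(v,w)|/\sqrt{B(v,v)B(w,w)}$, boundary = isotropic lines, $\mathrm{Isom}(\mathbf H^\infty_{\mathbb C})_o=PU(B)$; complex hyperbolic subspaces are projectivizations of closed complex subspaces of signature $(1,m')$. $\mathbf H^1_{\mathbb C}$: $\mathbb C^2$ with $B(z,w)=z_1\bar w_1-z_2\bar w_2$, $\xi_{1,2}=(e_1\pm e_2)/\sqrt2$; $g(\lambda,b)\in SU(1,1)$ has matrix $\begin{pmatrix}\lambda&ib\\0&\lambda^{-1}\end{pmatrix}$ in basis $(\xi_1,\xi_2)$. Representations are orbitally continuous; non-elementary = no fixed point in $\mathbf H^\infty_{\mathbb C}\cup\partial\mathbf H^\infty_{\mathbb C}$ and no invariant pair of boundary points. For such $\rho$: $\eta_1$ = unique common fixed boundary point of the $\rho(g(\lambda,b))$, $\eta_2$ = other endpoint of the common axis of the hyperbolic $\rho(g(\lambda,0))$, $\lambda\neq1$; isotropic representatives with $B(\eta_1,\eta_2)=1$;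 $E=\eta_1^\perp\cap\eta_2^\perp$. The lift $T_b\in U(B)$ of $\rho(g(1,b))$ with $T_b\eta_1=\eta_1$ satisfies $T_b\eta_2=K(b)\eta_1+\eta_2+c(b)$, $K(b)\in\mathbb C$, $c(b)\in E$. $\mathrm{Arg}(\rho)$ is the argument of $K(1)$ (it lies in $[0,\pi/2]$ and is independent of choices). *)

theory Defs
  imports "HOL-Analysis.Analysis"
begin

text \<open>Model of the ambient space: the separable Hilbert space of square-summable
  sequences v :: nat => complex, with the Hermitian form of signature (1,infinity)
  B(v,w) = v0 conj(w0) - sum_{n>=1} v_n conj(w_n). Every separable complex Hilbert space
  with a strongly non-degenerate Hermitian form of signature (1,infinity) is isomorphic to
  this model.\<close>

definition Hsp :: "(nat \<Rightarrow> complex) set" where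
  "Hsp = {f. summable (\<lambda>n. (cmod (f n))\<^sup>2)}"

definition Bf :: "(nat \<Rightarrow> complex) \<Rightarrow> (nat \<Rightarrow> complex) \<Rightarrow> complex" where
  "Bf f g = f 0 * cnj (g 0) - (\<Sum>n. f (Suc n) * cnj (g (Suc n)))"

definition vsmul :: "complex \<Rightarrow> (nat \<Rightarrow> complex) \<Rightarrow> (nat \<Rightarrow> complex)" where
  "vsmul c f = (\<lambda>n. c * f n)"

definition vadd :: "(nat \<Rightarrow> complex) \<Rightarrow> (nat \<Rightarrow> complex) \<Rightarrow> (nat \<Rightarrow> complex)" where
  "vadd f g = (\<lambda>n. f n + g n)"

definition in_UB :: "((nat \<Rightarrow> complex) \<Rightarrow> (nat \<Rightarrow> complex)) \<Rightarrow> bool" where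
  "in_UB T \<longleftrightarrow> bij_betw T Hsp Hsp
     \<and> (\<forall>v\<in>Hsp. \<forall>w\<in>Hsp. \<forall>a b. T (vadd (vsmul a v) (vsmul b w)) = vadd (vsmul a (T v)) (vsmul b (T w)))
     \<and> (\<forall>v\<in>Hsp. \<forall>w\<in>Hsp. Bf (T v) (T w) = Bf v w)"

definition B1 :: "complex^2 \<Rightarrow> complex^2 \<Rightarrow> complex" where
  "B1 z w = z$1 * cnj (w$1) - z$2 * cnj (w$2)"

definition SU11 :: "(complex^2^2) set" where
  "SU11 = {M. det M = 1 \<and> (\<forall>z w. B1 (M *v z) (M *v w) = B1 z w)}"

definition mat2 :: "complex \<Rightarrow> complex \<Rightarrow> complex \<Rightarrow> complex \<Rightarrow> complex^2^2" where
  "mat2 a b c d = (\<chi> i j. if i = 1 then (if j = 1 then a else b) else (if j = 1 then c else d))"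

text \<open>g(lambda,b): the matrix ((lambda, i b),(0, 1/lambda)) in the basis
  xi1 = (e1+e2)/sqrt 2, xi2 = (e1-e2)/sqrt 2, written in the standard basis.\<close>
definition gmat :: "real \<Rightarrow> real \<Rightarrow> complex^2^2" where
  "gmat l b = mat2 ((of_real l + of_real (1/l) + \<i> * of_real b) / 2)
                   ((of_real l - of_real (1/l) - \<i> * of_real b) / 2)
                   ((of_real l - of_real (1/l) + \<i> * of_real b) / 2)
                   ((of_real l + of_real (1/l) - \<i> * of_real b) / 2)"

text \<open>A representation PU(1,1) = SU(1,1)/{+-1} -> PU(B), given by lifts rho g in U(B)
  which are multiplicative up to unit scalars and with rho(-1) scalar.\<close>
definition proj_rep :: "(complex^2^2 \<Rightarrow> (nat \<Rightarrow> complex) \<Rightarrow> (nat \<Rightarrow> complex)) \<Rightarrow> bool" where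
  "proj_rep \<rho> \<longleftrightarrow> (\<forall>g\<in>SU11. in_UB (\<rho> g))
     \<and> (\<forall>g\<in>SU11. \<forall>h\<in>SU11. \<exists>c. cmod c = 1 \<and> (\<forall>v\<in>Hsp. \<rho> (g ** h) v = vsmul c (\<rho> g (\<rho> h v))))
     \<and> (\<exists>c. \<forall>v\<in>Hsp. \<rho> (- mat 1) v = vsmul c v)"

text \<open>cosh of the hyperbolic distance between the points [v],[w].\<close>
definition hcosh :: "(nat \<Rightarrow> complex) \<Rightarrow> (nat \<Rightarrow> complex) \<Rightarrow> real" where
  "hcosh v w = cmod (Bf v w) / sqrt (Re (Bf v v) * Re (Bf w w))"

definition orbitally_continuous :: "(complex^2^2 \<Rightarrow> (nat \<Rightarrow> complex) \<Rightarrow> (nat \<Rightarrow> complex)) \<Rightarrow> bool" where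
  "orbitally_continuous \<rho> \<longleftrightarrow> (\<forall>v\<in>Hsp. Re (Bf v v) > 0 \<longrightarrow>
     (\<forall>g0\<in>SU11. ((\<lambda>g. hcosh (\<rho> g v) (\<rho> g0 v)) \<longlongrightarrow> 1) (at g0 within SU11)))"

definition fixes_pt :: "((nat \<Rightarrow> complex) \<Rightarrow> (nat \<Rightarrow> complex)) \<Rightarrow> (nat \<Rightarrow> complex) \<Rightarrow> bool" where
  "fixes_pt T v \<longleftrightarrow> (\<exists>\<mu>. T v = vsmul \<mu> v)"

definition non_elementary :: "(complex^2^2 \<Rightarrow> (nat \<Rightarrow> complex) \<Rightarrow> (nat \<Rightarrow> complex)) \<Rightarrow> bool" where
  "non_elementary \<rho> \<longleftrightarrow>
     \<not> (\<exists>v\<in>Hsp. v \<noteq> (\<lambda>n. 0) \<and> Re (Bf v v) \<ge> 0 \<and> (\<forall>g\<in>SU11. fixes_pt (\<rho> g) v))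
   \<and> \<not> (\<exists>v\<in>Hsp. \<exists>w\<in>Hsp. v \<noteq> (\<lambda>n. 0) \<and> w \<noteq> (\<lambda>n. 0) \<and> Bf v v = 0 \<and> Bf w w = 0
         \<and> \<not> (\<exists>\<mu>. w = vsmul \<mu> v)
         \<and> (\<forall>g\<in>SU11. (fixes_pt (\<rho> g) v \<and> fixes_pt (\<rho> g) w)
                     \<or> ((\<exists>\<mu>. \<rho> g v = vsmul \<mu> w) \<and> (\<exists>\<mu>. \<rho> g w = vsmul \<mu> v))))"

text \<open>Arg(rho) = theta: for isotropic representatives eta1 (common fixed boundary point of
  all rho(g(lambda,b))), eta2 (the other common fixed boundary point of the hyperbolic
  rho(g(lambda,0)), lambda /= 1, i.e. the other endpoint of their common axis) with
  B(eta1,eta2) = 1, the lift T = c rho(g(1,1)) with T eta1 = eta1 satisfies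
  T eta2 = K eta1 + eta2 + e with e in E, and theta is the argument of K.
  (The paper shows these objects exist and that arg K is independent of choices.)\<close>
definition Arg_is :: "(complex^2^2 \<Rightarrow> (nat \<Rightarrow> complex) \<Rightarrow> (nat \<Rightarrow> complex)) \<Rightarrow> real \<Rightarrow> bool" where
  "Arg_is \<rho> \<theta> \<longleftrightarrow> (\<exists>\<eta>1\<in>Hsp. \<exists>\<eta>2\<in>Hsp. \<exists>c K e.
      Bf \<eta>1 \<eta>1 = 0 \<and> Bf \<eta>2 \<eta>2 = 0 \<and> Bf \<eta>1 \<eta>2 = 1
    \<and> (\<forall>l b. l > 0 \<longrightarrow> fixes_pt (\<rho> (gmat l b)) \<eta>1)
    \<and> (\<forall>l. l > 0 \<and> l \<noteq> 1 \<longrightarrow> fixes_pt (\<rho> (gmat l 0)) \<eta>2)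
    \<and> cmod c = 1 \<and> vsmul c (\<rho> (gmat 1 1) \<eta>1) = \<eta>1
    \<and> e \<in> Hsp \<and> Bf e \<eta>1 = 0 \<and> Bf e \<eta>2 = 0
    \<and> vsmul c (\<rho> (gmat 1 1) \<eta>2) = vadd (vadd (vsmul K \<eta>1) \<eta>2) e
    \<and> Arg K = \<theta>)"

text \<open>W is (the underlying closed complex subspace of) a complex hyperbolic subspace
  isometric to H^1_C: a subspace of signature (1,1).\<close>
definition cx_hyp_line :: "(nat \<Rightarrow> complex) set \<Rightarrow> bool" where
  "cx_hyp_line W \<longleftrightarrow> (\<exists>v\<in>Hsp. \<exists>w\<in>Hsp. Bf v v = 1 \<and> Bf w w = -1 \<and> Bf v w = 0
      \<and> W = {vadd (vsmul a v) (vsmul b w) | a b. True})"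

end

theory Submission
  imports Defs
begin

text \<open>
  Let W be the plane spanned by \<eta>1 and \<eta>2; it has signature (1,1) and its orthogonal
  complement is negative definite. Since Arg(\<rho>) = pi/2, K is purely imaginary, so the
  isotropy of T\<eta>2 = K\<eta>1 + \<eta>2 + e forces B(e,e) = 0, hence e = 0 and g(1,1) preserves W.
  The diagonal elements g(\<lambda>,0) fix [\<eta>1] and [\<eta>2], and -1 acts by a scalar.
  Conjugating g(1,1) by g(sqrt 2,0) shows that \<rho>(g(sqrt 2,0)) is hyperbolic, so its
  isotropic eigenvectors lie in W; the Weyl element conjugates g(sqrt 2,0) to its inverse and
  therefore preserves W as well. The stabiliser of W is closed under products and cancellation,
  and by the Bruhat decomposition the elements above generate SU(1,1).
\<close>

section \<open>The Hermitian form on square-summable sequences\<close>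

lemma Hsp_zero [simp]: "(\<lambda>n. 0) \<in> Hsp"
  by (simp add: Hsp_def)

lemma Hsp_vsmul [simp]: "f \<in> Hsp \<Longrightarrow> vsmul c f \<in> Hsp"
  by (simp add: Hsp_def vsmul_def norm_mult power_mult_distrib summable_mult)

lemma Hsp_vadd [simp]:
  assumes "f \<in> Hsp" "g \<in> Hsp"
  shows "vadd f g \<in> Hsp"
proof -
  have "(cmod (a + b))\<^sup>2 \<le> 2 * (cmod a)\<^sup>2 + 2 * (cmod b)\<^sup>2" for a b :: complex
    using power_mono[OF norm_triangle_ineq[of a b] norm_ge_zero, of 2]
      sum_squares_bound[of "cmod a" "cmod b"]
    unfolding power2_sum by linarith
  moreover have "summable (\<lambda>n. 2 * (cmod (f n))\<^sup>2 + 2 * (cmod (g n))\<^sup>2)"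
    using assms by (simp add: Hsp_def summable_add summable_mult)
  ultimately show ?thesis
    unfolding Hsp_def vadd_def by (auto intro: summable_comparison_test'[where N=0])
qed

lemma vsmul_vsmul: "vsmul k (vsmul a x) = vsmul (k*a) x"
  by (simp add: vsmul_def mult.assoc)

lemma vsmul_eq_iff: "c \<noteq> 0 \<Longrightarrow> vsmul c x = y \<longleftrightarrow> x = vsmul (1/c) y"
  by (auto simp: vsmul_def)

lemma summable_Bf_tail:
  assumes "f \<in> Hsp" "g \<in> Hsp"
  shows "summable (\<lambda>n. f (Suc n) * cnj (g (Suc n)))"
proof -
  have "cmod (a * cnj b) \<le> (cmod a)\<^sup>2 + (cmod b)\<^sup>2" for a b :: complex
    using sum_squares_bound[of "cmod a" "cmod b"] mult_nonneg_nonneg[OF norm_ge_zero norm_ge_zero, of a b]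
    unfolding norm_mult complex_mod_cnj by linarith
  moreover have "summable (\<lambda>n. (cmod (f n))\<^sup>2 + (cmod (g n))\<^sup>2)"
    using assms by (simp add: Hsp_def summable_add)
  ultimately have "summable (\<lambda>n. f n * cnj (g n))"
    by (auto intro: summable_comparison_test'[where N=0])
  then show ?thesis
    by (subst summable_Suc_iff)
qed

lemma summable_Hsp_tail_sq:
  "f \<in> Hsp \<Longrightarrow> summable (\<lambda>n. (cmod (f (Suc n)))\<^sup>2)"
  using summable_Suc_iff[of "\<lambda>n. (cmod (f n))\<^sup>2"] by (simp add: Hsp_def)

lemma Bf_self:
  assumes "v \<in> Hsp"
  shows "Bf v v = of_real ((cmod (v 0))\<^sup>2 - (\<Sum>n. (cmod (v (Suc n)))\<^sup>2))"
proof -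
  have "(\<Sum>n. v (Suc n) * cnj (v (Suc n))) = of_real (\<Sum>n. (cmod (v (Suc n)))\<^sup>2)"
    unfolding complex_norm_square[symmetric]
    by (rule suminf_of_real[OF summable_Hsp_tail_sq[OF assms], symmetric])
  then show ?thesis
    unfolding Bf_def complex_norm_square[symmetric] by simp
qed

lemma Bf_vadd_left [simp]:
  assumes "x \<in> Hsp" "y \<in> Hsp" "z \<in> Hsp"
  shows "Bf (vadd x y) z = Bf x z + Bf y z"
  using suminf_add[OF summable_Bf_tail[OF assms(1,3)] summable_Bf_tail[OF assms(2,3)], symmetric]
  by (simp add: Bf_def vadd_def distrib_right)

lemma Bf_vsmul_left [simp]:
  assumes "x \<in> Hsp" "z \<in> Hsp"
  shows "Bf (vsmul a x) z = a * Bf x z"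
  using suminf_mult[OF summable_Bf_tail[OF assms], of a]
  by (simp add: Bf_def vsmul_def right_diff_distrib mult.assoc)

lemma Bf_swap:
  assumes "x \<in> Hsp" "z \<in> Hsp"
  shows "Bf z x = cnj (Bf x z)"
proof -
  have "(\<lambda>n. z (Suc n) * cnj (x (Suc n))) sums cnj (\<Sum>n. x (Suc n) * cnj (z (Suc n)))"
    using sums_cnj[THEN iffD2, OF summable_sums[OF summable_Bf_tail[OF assms]]]
    by (simp add: mult.commute)
  then show ?thesis
    by (simp add: Bf_def sums_unique[symmetric] mult.commute)
qed

lemma Bf_vadd_right [simp]:
  "x \<in> Hsp \<Longrightarrow> y \<in> Hsp \<Longrightarrow> z \<in> Hsp \<Longrightarrow> Bf z (vadd x y) = Bf z x + Bf z y"
  by (subst (1 2 3) Bf_swap) auto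

lemma Bf_vsmul_right [simp]:
  "x \<in> Hsp \<Longrightarrow> z \<in> Hsp \<Longrightarrow> Bf z (vsmul a x) = cnj a * Bf z x"
  by (subst (1 2) Bf_swap) auto

lemma isotropic_orthogonal_to_positive_eq_zero:
  assumes u: "u \<in> Hsp" and u_pos: "Re (Bf u u) > 0"
    and e: "e \<in> Hsp" and eu: "Bf e u = 0" and ee: "Bf e e = 0"
  shows "e = (\<lambda>n. 0)"
proof -
  let ?tail = "\<lambda>v. \<Sum>n. (cmod (v (Suc n)))\<^sup>2"
  have tail_nonneg: "?tail v \<ge> 0" if "v \<in> Hsp" for v
    using summable_Hsp_tail_sq[OF that] by (simp add: suminf_nonneg)
  have u0: "u 0 \<noteq> 0"
  proof
    assume "u 0 = 0"
    then have "Re (Bf u u) = - ?tail u" using Bf_self[OF u] by simp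
    then show False using u_pos tail_nonneg[OF u] by linarith
  qed
  \<comment> \<open>v has vanishing 0-th coordinate, so B(v,v) <= 0, while B(v,v) = |e 0|^2 B(u,u).\<close>
  define v where "v = vadd (vsmul (e 0) u) (vsmul (- u 0) e)"
  have v: "v \<in> Hsp" using u e by (simp add: v_def)
  have ue: "Bf u e = 0" using Bf_swap[OF e u] eu by simp
  have "Bf v v = e 0 * cnj (e 0) * Bf u u"
    using u e eu ue ee by (simp add: v_def algebra_simps)
  then have "Re (Bf v v) = (cmod (e 0))\<^sup>2 * Re (Bf u u)"
    by (simp add: complex_mult_cnj cmod_power2)
  moreover have "Re (Bf v v) = - ?tail v"
    using Bf_self[OF v] by (simp add: v_def vadd_def vsmul_def)
  ultimately have "(cmod (e 0))\<^sup>2 * Re (Bf u u) = - ?tail v"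
    by simp
  moreover have "(cmod (e 0))\<^sup>2 * Re (Bf u u) \<ge> 0" using u_pos by simp
  ultimately have "(cmod (e 0))\<^sup>2 * Re (Bf u u) = 0" and tail_v: "?tail v = 0"
    using tail_nonneg[OF v] by linarith+
  then have e0: "e 0 = 0" using u_pos by simp
  have "v (Suc n) = 0" for n
    using tail_v summable_Hsp_tail_sq[OF v] by (simp add: suminf_eq_zero_iff)
  then have "e (Suc n) = 0" for n
    using u0 e0 by (simp add: v_def vadd_def vsmul_def)
  with e0 show ?thesis
    by (metis not0_implies_Suc)
qed

section \<open>SU(1,1) in the basis \<xi>1, \<xi>2\<close>

lemma mat2_nth [simp]:
  "mat2 a b c d $ 1 $ 1 = a" "mat2 a b c d $ 1 $ 2 = b"
  "mat2 a b c d $ 2 $ 1 = c" "mat2 a b c d $ 2 $ 2 = d"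
  by (simp_all add: mat2_def)

lemma mat2_eta: "(M :: complex^2^2) = mat2 (M$1$1) (M$1$2) (M$2$1) (M$2$2)"
  unfolding vec_eq_iff forall_2 by simp

lemma mat2_eq_iff: "mat2 a b c d = mat2 a' b' c' d' \<longleftrightarrow> a = a' \<and> b = b' \<and> c = c' \<and> d = d'"
  unfolding vec_eq_iff forall_2 by simp

lemma mat2_mult:
  "mat2 a b c d ** mat2 a' b' c' d' = mat2 (a*a' + b*c') (a*b' + b*d') (c*a' + d*c') (c*b' + d*d')"
  unfolding vec_eq_iff forall_2 matrix_matrix_mult_def by (simp add: sum_2)

lemma mat2_mult_vec [simp]:
  "(mat2 a b c d *v z) $ 1 = a * z$1 + b * z$2"
  "(mat2 a b c d *v z) $ 2 = c * z$1 + d * z$2"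
  by (simp_all add: matrix_vector_mult_def sum_2)

text \<open>The matrix with rows (p, q), (r, s) in the basis \<xi>1, \<xi>2, written in the standard basis.\<close>
definition xi_mat :: "complex \<Rightarrow> complex \<Rightarrow> complex \<Rightarrow> complex \<Rightarrow> complex^2^2" where
  "xi_mat p q r s = mat2 ((p+q+r+s)/2) ((p-q+r-s)/2) ((p+q-r-s)/2) ((p-q-r+s)/2)"

lemma xi_mat_mult:
  "xi_mat a b c d ** xi_mat a' b' c' d' = xi_mat (a*a' + b*c') (a*b' + b*d') (c*a' + d*c') (c*b' + d*d')"
  unfolding xi_mat_def mat2_mult mat2_eq_iff by (simp add: field_simps)

lemma gmat_eq_xi_mat: "l \<noteq> 0 \<Longrightarrow> gmat l b = xi_mat (of_real l) (\<i> * of_real b) 0 (of_real (1/l))"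
  unfolding gmat_def xi_mat_def mat2_eq_iff by (simp add: field_simps)

definition weyl :: "complex^2^2" where
  "weyl = xi_mat 0 \<i> \<i> 0"

lemma minus_one_eq_xi_mat: "- mat 1 = xi_mat (-1) 0 0 (-1)"
  unfolding xi_mat_def vec_eq_iff forall_2 by (simp add: mat_def)

lemma gmat_mult:
  assumes "l \<noteq> 0" "l' \<noteq> 0"
  shows "gmat l b ** gmat l' b' = gmat (l * l') (l * b' + b / l')"
  using assms by (simp add: gmat_eq_xi_mat xi_mat_mult field_simps)

lemma gmat_weyl_commute: "t \<noteq> 0 \<Longrightarrow> gmat t 0 ** weyl = weyl ** gmat (1/t) 0"
  by (simp add: weyl_def gmat_eq_xi_mat xi_mat_mult mult.commute)

lemma xi_mat_Bruhat:
  fixes p q r s :: real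
  assumes "r \<noteq> 0" "p * s + q * r = 1"
  shows "xi_mat p (\<i> * q) (\<i> * r) s = gmat 1 (-p/r) ** weyl ** gmat r (-s)"
proof -
  have q: "q = (1 - p * s) / r" using assms by (simp add: field_simps)
  show ?thesis
    using assms(1) unfolding weyl_def
    by (simp add: gmat_eq_xi_mat xi_mat_mult matrix_mul_assoc q field_simps)
qed

lemma xi_mat_upper_eq_gmat:
  fixes p q s :: real
  assumes "p * s = 1"
  shows "xi_mat p (\<i> * q) 0 s = gmat p q"
proof -
  have "p \<noteq> 0" using assms by auto
  moreover have "s = 1/p" using assms calculation by (simp add: field_simps mult.commute)
  ultimately show ?thesis by (simp add: gmat_eq_xi_mat)
qed

lemma minus_one_mult_xi_mat: "- mat 1 ** xi_mat p q r s = xi_mat (-p) (-q) (-r) (-s)"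
  unfolding minus_one_eq_xi_mat xi_mat_mult by simp

lemma mat2_in_SU11:
  assumes "a * cnj a - b * cnj b = 1"
  shows "mat2 a b (cnj b) (cnj a) \<in> SU11"
proof -
  have "B1 (mat2 a b (cnj b) (cnj a) *v z) (mat2 a b (cnj b) (cnj a) *v w)
      = (a * cnj a - b * cnj b) * (z$1 * cnj (w$1)) - (a * cnj a - b * cnj b) * (z$2 * cnj (w$2))"
    for z w by (simp add: B1_def algebra_simps)
  with assms show ?thesis
    by (simp add: SU11_def B1_def det_2)
qed

lemma xi_mat_in_SU11:
  fixes p q r s :: real
  assumes "p * s + q * r = 1"
  shows "xi_mat p (\<i> * q) (\<i> * r) s \<in> SU11"
proof -
  define a where "a = (p + \<i> * q + \<i> * r + s) / (2::complex)"
  define b where "b = (p - \<i> * q + \<i> * r - s) / (2::complex)"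
  have "xi_mat p (\<i> * q) (\<i> * r) s = mat2 a b (cnj b) (cnj a)"
    unfolding xi_mat_def mat2_eq_iff a_def b_def by (simp add: complex_eq_iff)
  moreover have "a * cnj a - b * cnj b = 1"
    using assms unfolding a_def b_def
    by (simp add: complex_eq_iff algebra_simps power2_eq_square) algebra
  ultimately show ?thesis
    using mat2_in_SU11 by simp
qed

lemma gmat_in_SU11: "l \<noteq> 0 \<Longrightarrow> gmat l b \<in> SU11"
  using xi_mat_in_SU11[of l "1/l" b 0] by (simp add: gmat_eq_xi_mat)

lemma weyl_in_SU11: "weyl \<in> SU11"
  using xi_mat_in_SU11[of 0 0 1 1] by (simp add: weyl_def)

lemma minus_one_in_SU11: "- mat 1 \<in> SU11"
  using xi_mat_in_SU11[of "-1" "-1" 0 0] by (simp add: minus_one_eq_xi_mat)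

lemma SU11_mult: "g \<in> SU11 \<Longrightarrow> h \<in> SU11 \<Longrightarrow> g ** h \<in> SU11"
  by (simp add: SU11_def det_mul matrix_vector_mul_assoc[symmetric])

lemma SU11_obtain_xi_mat:
  assumes "M \<in> SU11"
  obtains p q r s :: real
  where "p * s + q * r = 1" "M = xi_mat p (\<i> * q) (\<i> * r) s"
proof -
  define a b c d where "a = M$1$1" "b = M$1$2" "c = M$2$1" "d = M$2$2"
  have M: "M = mat2 a b c d" unfolding a_b_c_d_def by (rule mat2_eta)
  define u1 :: "complex^2" where "u1 = (\<chi> i. if i = 1 then 1 else 0)"
  define u2 :: "complex^2" where "u2 = (\<chi> i. if i = 1 then 0 else 1)"
  have B: "\<And>z w. B1 (M *v z) (M *v w) = B1 z w" and D: "det M = 1"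
    using assms by (auto simp: SU11_def)
  have E1: "a * cnj a - c * cnj c = 1" using B[of u1 u1] by (simp add: M B1_def u1_def)
  have E2: "b * cnj b - d * cnj d = -1" using B[of u2 u2] by (simp add: M B1_def u2_def)
  have E3: "cnj a * b = cnj c * d" using B[of u2 u1] by (simp add: M B1_def u1_def u2_def mult.commute)
  have Dt: "a * d - b * c = 1" using D by (simp add: M det_2)
  have "cnj a = cnj a * (a * d - b * c)" using Dt by simp
  also have "\<dots> = (a * cnj a - c * cnj c) * d" using E3 by (simp add: algebra_simps)
  finally have d: "d = cnj a" using E1 by simp
  have c: "c = cnj b"
  proof (cases "c = 0")
    case True
    then have "b * cnj b = 0" using E1 E2 d by (simp add: mult.commute)
    then show ?thesis using True by simp
  next
    case False
    have "b * c = c * cnj c" using Dt E1 d by (simp add: algebra_simps)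
    then show ?thesis using False by (simp add: mult.commute)
  qed
  have "M = xi_mat (Re a + Re b) (\<i> * (Im a - Im b)) (\<i> * (Im a + Im b)) (Re a - Re b)"
    unfolding M d c xi_mat_def mat2_eq_iff by (simp add: complex_eq_iff)
  moreover have "(Re a + Re b) * (Re a - Re b) + (Im a - Im b) * (Im a + Im b) = 1"
    using arg_cong[OF E1, of Re] unfolding c by (simp add: algebra_simps power2_eq_square)
  ultimately show ?thesis
    using that by blast
qed

lemma SU11_subset_generated:
  assumes mult: "\<And>g h. g \<in> S \<Longrightarrow> h \<in> S \<Longrightarrow> g ** h \<in> S"
    and upper: "\<And>l b. l > 0 \<Longrightarrow> gmat l b \<in> S"
    and weyl: "weyl \<in> S" and minus_one: "- mat 1 \<in> S"
  shows "SU11 \<subseteq> S"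
proof
  have positive: "xi_mat p (\<i> * q) (\<i> * r) s \<in> S"
    if ps: "p * s + q * r = 1" and pos: "r > 0 \<or> (r = 0 \<and> p > 0)" for p q r s :: real
    using pos
  proof
    assume "r > 0"
    then show ?thesis
      using xi_mat_Bruhat[OF _ ps] by (simp add: mult upper weyl)
  next
    assume "r = 0 \<and> p > 0"
    then show ?thesis
      using xi_mat_upper_eq_gmat[of p s q] ps upper by simp
  qed
  fix M assume "M \<in> SU11"
  then obtain p q r s :: real where ps: "p * s + q * r = 1"
    and M: "M = xi_mat p (\<i> * q) (\<i> * r) s"
    by (rule SU11_obtain_xi_mat)
  show "M \<in> S"
  proof (cases "r > 0 \<or> (r = 0 \<and> p > 0)")
    case True
    then show ?thesis using positive[OF ps] M by simp
  next
    case False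
    moreover have "r = 0 \<Longrightarrow> p \<noteq> 0" using ps by auto
    ultimately have "- mat 1 ** xi_mat (-p) (\<i> * (-q)) (\<i> * (-r)) (-s) \<in> S"
      using mult[OF minus_one positive[of "-p" "-s" "-q" "-r"]] ps by force
    then show ?thesis
      unfolding minus_one_mult_xi_mat M by simp
  qed
qed

section \<open>Linear maps and the plane spanned by an isotropic pair\<close>

definition Hsp_linear :: "((nat \<Rightarrow> complex) \<Rightarrow> (nat \<Rightarrow> complex)) \<Rightarrow> bool" where
  "Hsp_linear T \<longleftrightarrow> (\<forall>v\<in>Hsp. \<forall>w\<in>Hsp. \<forall>a b.
     T (vadd (vsmul a v) (vsmul b w)) = vadd (vsmul a (T v)) (vsmul b (T w)))"

lemma Hsp_linear_vsmul:
  assumes "Hsp_linear T" "v \<in> Hsp"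
  shows "T (vsmul a v) = vsmul a (T v)"
proof -
  have "vadd (vsmul a u) (vsmul 0 u) = vsmul a u" for u
    by (simp add: vadd_def vsmul_def)
  then show ?thesis
    using assms unfolding Hsp_linear_def by metis
qed

lemma Hsp_linear_vadd:
  assumes "Hsp_linear T" "v \<in> Hsp" "w \<in> Hsp"
  shows "T (vadd v w) = vadd (T v) (T w)"
proof -
  have "vsmul 1 u = u" for u
    by (simp add: vsmul_def)
  then show ?thesis
    using assms unfolding Hsp_linear_def by metis
qed

lemma in_UB_Hsp_linear: "in_UB T \<Longrightarrow> Hsp_linear T"
  by (simp add: in_UB_def Hsp_linear_def)

lemma in_UB_Bf: "in_UB T \<Longrightarrow> v \<in> Hsp \<Longrightarrow> w \<in> Hsp \<Longrightarrow> Bf (T v) (T w) = Bf v w"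
  by (simp add: in_UB_def)

lemma in_UB_Hsp: "in_UB T \<Longrightarrow> v \<in> Hsp \<Longrightarrow> T v \<in> Hsp"
  by (auto simp: in_UB_def bij_betw_def)

lemma in_UB_inj_on: "in_UB T \<Longrightarrow> inj_on T Hsp"
  by (auto simp: in_UB_def bij_betw_def)

definition span2 :: "(nat \<Rightarrow> complex) \<Rightarrow> (nat \<Rightarrow> complex) \<Rightarrow> (nat \<Rightarrow> complex) set" where
  "span2 e1 e2 = {vadd (vsmul a e1) (vsmul b e2) | a b. True}"

lemma in_span2: "vadd (vsmul a e1) (vsmul b e2) \<in> span2 e1 e2"
  unfolding span2_def by blast

lemma vsmul_combination:
  "vsmul k (vadd (vsmul a e1) (vsmul b e2)) = vadd (vsmul (k*a) e1) (vsmul (k*b) e2)"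
  by (simp add: vadd_def vsmul_def algebra_simps)

lemma span2_vsmul: "x \<in> span2 e1 e2 \<Longrightarrow> vsmul c x \<in> span2 e1 e2"
  unfolding span2_def using vsmul_combination by blast

locale isotropic_pair =
  fixes e1 e2 :: "nat \<Rightarrow> complex"
  assumes e1: "e1 \<in> Hsp" and e2: "e2 \<in> Hsp"
    and B11: "Bf e1 e1 = 0" and B22: "Bf e2 e2 = 0" and B12: "Bf e1 e2 = 1"
begin

abbreviation W where "W \<equiv> span2 e1 e2"

lemma B21: "Bf e2 e1 = 1"
  using Bf_swap[OF e1 e2] B12 by simp

lemma Bf_combination_e2: "Bf (vadd (vsmul a e1) (vsmul b e2)) e2 = a"
  using e1 e2 B12 B22 by simp

lemma Bf_combination_e1: "Bf (vadd (vsmul a e1) (vsmul b e2)) e1 = b"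
  using e1 e2 B11 B21 by simp

lemma combination_eq_iff:
  "vadd (vsmul a e1) (vsmul b e2) = vadd (vsmul a' e1) (vsmul b' e2) \<longleftrightarrow> a = a' \<and> b = b'"
  by (metis Bf_combination_e1 Bf_combination_e2)

lemma e1_in_W: "e1 \<in> W"
  using in_span2[of 1 e1 0 e2] by (simp add: vadd_def vsmul_def)

lemma e2_in_W: "e2 \<in> W"
  using in_span2[of 0 e1 1 e2] by (simp add: vadd_def vsmul_def)

lemma W_subset_Hsp: "W \<subseteq> Hsp"
  using e1 e2 by (auto simp: span2_def)

lemma Hsp_linear_combination:
  assumes "Hsp_linear T"
    and "T e1 = vadd (vsmul x1 e1) (vsmul y1 e2)" "T e2 = vadd (vsmul x2 e1) (vsmul y2 e2)"
  shows "T (vadd (vsmul a e1) (vsmul b e2)) = vadd (vsmul (a*x1 + b*x2) e1) (vsmul (a*y1 + b*y2) e2)"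
  using assms e1 e2 unfolding Hsp_linear_def by (simp add: vadd_def vsmul_def algebra_simps)

lemma Hsp_linear_image_W:
  assumes T: "Hsp_linear T" "inj_on T Hsp" and "T e1 \<in> W" "T e2 \<in> W"
  shows "T ` W = W"
proof -
  obtain x1 y1 x2 y2 where
    T1: "T e1 = vadd (vsmul x1 e1) (vsmul y1 e2)" and T2: "T e2 = vadd (vsmul x2 e1) (vsmul y2 e2)"
    using assms(3,4) unfolding span2_def by blast
  note T_comb = Hsp_linear_combination[OF T(1) T1 T2]
  have kernel: "\<alpha> = 0 \<and> \<beta> = 0" if "\<alpha>*x1 + \<beta>*x2 = 0" "\<alpha>*y1 + \<beta>*y2 = 0" for \<alpha> \<beta>
  proof -
    have zero: "(\<lambda>n. 0) = vadd (vsmul 0 e1) (vsmul 0 e2)"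
      by (simp add: vadd_def vsmul_def)
    have "T (vadd (vsmul \<alpha> e1) (vsmul \<beta> e2)) = T (\<lambda>n. 0)"
      using T_comb that Hsp_linear_vsmul[OF T(1) e1, of 0] by (simp add: zero)
    then have "vadd (vsmul \<alpha> e1) (vsmul \<beta> e2) = (\<lambda>n. 0)"
      using T(2) e1 e2 by (simp add: inj_on_eq_iff)
    then show ?thesis
      by (simp add: zero combination_eq_iff)
  qed
  define d where "d = x1*y2 - x2*y1"
  have "d \<noteq> 0"
  proof
    assume "d = 0"
    then show False
      using kernel[of y2 "-y1"] kernel[of x2 "-x1"] kernel[of 1 0]
      by (simp add: d_def algebra_simps)
  qed
  have "z \<in> T ` W" if "z \<in> W" for z
  proof -
    obtain a b where z: "z = vadd (vsmul a e1) (vsmul b e2)"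
      using \<open>z \<in> W\<close> unfolding span2_def by blast
    let ?\<alpha> = "(a*y2 - b*x2) / d" and ?\<beta> = "(b*x1 - a*y1) / d"
    have "?\<alpha>*x1 + ?\<beta>*x2 = a" "?\<alpha>*y1 + ?\<beta>*y2 = b"
      using \<open>d \<noteq> 0\<close> by (simp_all add: field_simps) (simp_all add: d_def algebra_simps)
    then have "T (vadd (vsmul ?\<alpha> e1) (vsmul ?\<beta> e2)) = z"
      using T_comb z by simp
    then show ?thesis
      using in_span2 by blast
  qed
  moreover have "T ` W \<subseteq> W"
    using T_comb unfolding span2_def by auto
  ultimately show ?thesis
    by blast
qed

lemma isotropic_orthogonal_eq_zero:
  assumes "e \<in> Hsp" "Bf e e1 = 0" "Bf e e2 = 0" "Bf e e = 0"
  shows "e = (\<lambda>n. 0)"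
proof (rule isotropic_orthogonal_to_positive_eq_zero)
  show "vadd e1 e2 \<in> Hsp" "Re (Bf (vadd e1 e2) (vadd e1 e2)) > 0"
    using e1 e2 B11 B22 B12 B21 by simp_all
  show "Bf e (vadd e1 e2) = 0"
    using assms e1 e2 by simp
qed fact+

lemma orthogonal_decomposition:
  assumes "v \<in> Hsp"
  obtains e where "e \<in> Hsp" "Bf e e1 = 0" "Bf e e2 = 0"
    "v = vadd (vadd (vsmul (Bf v e2) e1) (vsmul (Bf v e1) e2)) e"
proof
  let ?e = "vadd v (vadd (vsmul (- Bf v e2) e1) (vsmul (- Bf v e1) e2))"
  show "?e \<in> Hsp" "Bf ?e e1 = 0" "Bf ?e e2 = 0"
    using assms e1 e2 B11 B12 B21 B22 by simp_all
  show "v = vadd (vadd (vsmul (Bf v e2) e1) (vsmul (Bf v e1) e2)) ?e"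
    by (simp add: vadd_def vsmul_def)
qed

lemma isotropic_eigenvector_in_W:
  assumes A: "in_UB A" and A1: "A e1 = vsmul \<mu>1 e1" and A2: "A e2 = vsmul \<mu>2 e2"
    and \<mu>1: "cmod \<mu>1 \<noteq> 1" and \<mu>2: "cmod \<mu>2 \<noteq> 1"
    and v: "v \<in> Hsp" and Av: "A v = vsmul \<nu> v" and vv: "Bf v v = 0"
  shows "v \<in> W"
proof -
  define a b where "a = Bf v e2" and "b = Bf v e1"
  obtain e where e: "e \<in> Hsp" "Bf e e1 = 0" "Bf e e2 = 0"
    and v_eq: "v = vadd (vadd (vsmul a e1) (vsmul b e2)) e"
    using orthogonal_decomposition[OF v] unfolding a_def b_def by blast
  have "\<mu>1 * cnj \<mu>2 = 1"
    using in_UB_Bf[OF A e1 e2] e1 e2 B12 by (simp add: A1 A2 mult.commute)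
  then have \<mu>12: "\<mu>1 * cnj \<mu>2 = 1" "cnj \<mu>1 * \<mu>2 = 1"
    using complex_cnj_mult[of \<mu>1 "cnj \<mu>2"] by (auto simp: mult.commute)
  have "\<nu> * a * cnj \<mu>2 = a"
    using in_UB_Bf[OF A v e2] v e2 by (simp add: Av A2 a_def b_def mult.commute)
  then have a_eq: "\<nu> * a = \<mu>1 * a"
    using \<mu>12(1) by (metis mult.assoc mult.commute mult.right_neutral)
  have "\<nu> * b * cnj \<mu>1 = b"
    using in_UB_Bf[OF A v e1] v e1 by (simp add: Av A1 a_def b_def mult.commute)
  then have b_eq: "\<nu> * b = \<mu>2 * b"
    using \<mu>12(2) by (metis mult.assoc mult.commute mult.right_neutral)
  have "A e n = \<nu> * e n" for n
  proof -
    have "A v = vadd (vadd (vsmul a (A e1)) (vsmul b (A e2))) (A e)"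
      using in_UB_Hsp_linear[OF A] e1 e2 e
      by (subst v_eq) (simp add: Hsp_linear_vadd Hsp_linear_vsmul)
    then have "A e n = \<nu> * v n - \<mu>1 * a * e1 n - \<mu>2 * b * e2 n"
      by (simp add: fun_eq_iff Av A1 A2 vadd_def vsmul_def algebra_simps)
    also have "\<dots> = \<nu> * e n"
      by (subst v_eq) (simp add: vadd_def vsmul_def algebra_simps flip: a_eq b_eq)
    finally show ?thesis .
  qed
  then have Ae: "A e = vsmul \<nu> e"
    by (simp add: fun_eq_iff vsmul_def)
  have "Bf e e = 0"
  proof (cases "cmod \<nu> = 1")
    case True
    then have "a = 0" "b = 0"
      using a_eq b_eq \<mu>1 \<mu>2 by auto
    then show ?thesis
      using v_eq vv by (simp add: vadd_def vsmul_def)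
  next
    case False
    have "(cmod \<nu>)\<^sup>2 \<noteq> 1"
      using False by (smt (verit) norm_ge_zero power2_eq_1_iff)
    then have "\<nu> * cnj \<nu> \<noteq> 1"
      by (metis complex_norm_square of_real_eq_1_iff)
    moreover have "Bf e e = \<nu> * cnj \<nu> * Bf e e"
      using in_UB_Bf[OF A e(1) e(1)] e(1) by (simp add: Ae mult.commute)
    ultimately show ?thesis
      by (metis mult_cancel_right1)
  qed
  then have "e = (\<lambda>n. 0)"
    using isotropic_orthogonal_eq_zero e by blast
  then show ?thesis
    using v_eq in_span2[of a e1 b e2] by (simp add: vadd_def)
qed

lemma cx_hyp_line_W: "cx_hyp_line W"
proof -
  define s where "s = complex_of_real (1 / sqrt 2)"
  have s: "cnj s = s" "s * s = 1/2" "s \<noteq> 0"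
    by (simp_all add: s_def flip: of_real_mult)
  define v w where "v = vadd (vsmul s e1) (vsmul s e2)" and "w = vadd (vsmul s e1) (vsmul (-s) e2)"
  have vw: "v \<in> Hsp" "w \<in> Hsp" "Bf v v = 1" "Bf w w = -1" "Bf v w = 0"
    using e1 e2 B11 B12 B21 B22 s by (simp_all add: v_def w_def mult.commute)
  have comb: "vadd (vsmul a v) (vsmul b w) = vadd (vsmul (s*(a+b)) e1) (vsmul (s*(a-b)) e2)" for a b
    by (simp add: v_def w_def vadd_def vsmul_def algebra_simps)
  have "z \<in> {vadd (vsmul a v) (vsmul b w) | a b. True}" if "z \<in> W" for z
  proof -
    obtain \<alpha> \<beta> where z: "z = vadd (vsmul \<alpha> e1) (vsmul \<beta> e2)"
      using \<open>z \<in> W\<close> unfolding span2_def by blast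
    have "z = vadd (vsmul ((\<alpha> + \<beta>) / (2 * s)) v) (vsmul ((\<alpha> - \<beta>) / (2 * s)) w)"
      using s(3) unfolding comb z by (simp add: field_simps)
    then show ?thesis by blast
  qed
  then have "W = {vadd (vsmul a v) (vsmul b w) | a b. True}"
    unfolding comb using in_span2 by blast
  then show ?thesis
    unfolding cx_hyp_line_def using vw by blast
qed

end

section \<open>The stabiliser of the plane\<close>

locale rep_isotropic_pair = isotropic_pair e1 e2 for e1 e2 +
  fixes \<rho> :: "complex^2^2 \<Rightarrow> (nat \<Rightarrow> complex) \<Rightarrow> (nat \<Rightarrow> complex)"
  assumes proj_rep: "proj_rep \<rho>"
begin

lemma rho_in_UB: "g \<in> SU11 \<Longrightarrow> in_UB (\<rho> g)"
  using proj_rep by (simp add: proj_rep_def)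

lemma rho_Hsp_linear: "g \<in> SU11 \<Longrightarrow> Hsp_linear (\<rho> g)"
  by (simp add: rho_in_UB in_UB_Hsp_linear)

lemma rho_mult:
  assumes "g \<in> SU11" "h \<in> SU11"
  obtains k where "k \<noteq> 0" "\<And>v. v \<in> Hsp \<Longrightarrow> \<rho> (g ** h) v = vsmul k (\<rho> g (\<rho> h v))"
proof -
  obtain k where k: "cmod k = 1" "\<forall>v\<in>Hsp. \<rho> (g ** h) v = vsmul k (\<rho> g (\<rho> h v))"
    using proj_rep assms unfolding proj_rep_def by blast
  show ?thesis
  proof (rule that)
    show "k \<noteq> 0"
      using k(1) by auto
  qed (use k(2) in blast)
qed

lemma rho_mult_eq:
  assumes "g1 \<in> SU11" "h1 \<in> SU11" "g2 \<in> SU11" "h2 \<in> SU11" and gh: "g1 ** h1 = g2 ** h2"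
  obtains k where "k \<noteq> 0" "\<And>v. v \<in> Hsp \<Longrightarrow> \<rho> g1 (\<rho> h1 v) = vsmul k (\<rho> g2 (\<rho> h2 v))"
proof -
  obtain k1 where k1: "k1 \<noteq> 0" "\<And>v. v \<in> Hsp \<Longrightarrow> \<rho> (g1 ** h1) v = vsmul k1 (\<rho> g1 (\<rho> h1 v))"
    using rho_mult[OF assms(1,2)] by blast
  obtain k2 where k2: "k2 \<noteq> 0" "\<And>v. v \<in> Hsp \<Longrightarrow> \<rho> (g2 ** h2) v = vsmul k2 (\<rho> g2 (\<rho> h2 v))"
    using rho_mult[OF assms(3,4)] by blast
  have "\<rho> g1 (\<rho> h1 v) = vsmul (k2 / k1) (\<rho> g2 (\<rho> h2 v))" if "v \<in> Hsp" for v
  proof -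
    have "vsmul k1 (\<rho> g1 (\<rho> h1 v)) = vsmul k2 (\<rho> g2 (\<rho> h2 v))"
      using k1(2)[OF that] k2(2)[OF that] gh by simp
    then show ?thesis
      using k1(1) by (simp add: vsmul_eq_iff vsmul_vsmul)
  qed
  moreover have "k2 / k1 \<noteq> 0"
    using k1(1) k2(1) by simp
  ultimately show ?thesis
    using that by blast
qed

definition stab :: "(complex^2^2) set" where
  "stab = {g \<in> SU11. \<rho> g ` W = W}"

lemma stab_intro:
  assumes g: "g \<in> SU11" and "\<rho> g e1 \<in> W" "\<rho> g e2 \<in> W"
  shows "g \<in> stab"
  using Hsp_linear_image_W[OF rho_Hsp_linear[OF g] in_UB_inj_on[OF rho_in_UB[OF g]]] assms
  by (simp add: stab_def)

lemma stab_mult: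
  assumes g: "g \<in> stab" and h: "h \<in> stab"
  shows "g ** h \<in> stab"
proof -
  have gh: "g \<in> SU11" "h \<in> SU11" using g h by (auto simp: stab_def)
  obtain k where k: "\<And>v. v \<in> Hsp \<Longrightarrow> \<rho> (g ** h) v = vsmul k (\<rho> g (\<rho> h v))"
    using rho_mult[OF gh] by blast
  have "\<rho> (g ** h) x \<in> W" if x: "x \<in> W" for x
  proof -
    have "\<rho> g (\<rho> h x) \<in> W"
      using g h x unfolding stab_def by blast
    then show ?thesis
      using k x W_subset_Hsp by (auto simp: span2_vsmul)
  qed
  then show ?thesis
    using stab_intro[OF SU11_mult[OF gh]] e1_in_W e2_in_W by blast
qed

lemma stab_cancel:
  assumes g: "g \<in> stab" and h: "h \<in> SU11" and gh: "g ** h \<in> stab"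
  shows "h \<in> stab"
proof -
  have g': "g \<in> SU11" using g by (simp add: stab_def)
  obtain k where "k \<noteq> 0" and k: "\<And>v. v \<in> Hsp \<Longrightarrow> \<rho> (g ** h) v = vsmul k (\<rho> g (\<rho> h v))"
    using rho_mult[OF g' h] by blast
  have "\<rho> h x \<in> W" if x: "x \<in> W" for x
  proof -
    have "vsmul k (\<rho> g (\<rho> h x)) = \<rho> (g ** h) x"
      using k x W_subset_Hsp by auto
    then have "\<rho> g (\<rho> h x) = vsmul (1/k) (\<rho> (g ** h) x)"
      using vsmul_eq_iff[OF \<open>k \<noteq> 0\<close>] by blast
    moreover have "\<rho> (g ** h) x \<in> W"
      using gh x unfolding stab_def by blast
    ultimately have "\<rho> g (\<rho> h x) \<in> \<rho> g ` W"
      using g span2_vsmul unfolding stab_def by auto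
    then obtain y where y: "y \<in> W" "\<rho> g (\<rho> h x) = \<rho> g y"
      by blast
    moreover have "\<rho> h x \<in> Hsp"
      using in_UB_Hsp[OF rho_in_UB[OF h]] x W_subset_Hsp by blast
    ultimately have "\<rho> h x = y"
      using inj_onD[OF in_UB_inj_on[OF rho_in_UB[OF g']]] W_subset_Hsp by blast
    with y show ?thesis
      by simp
  qed
  then show ?thesis
    using stab_intro[OF h] e1_in_W e2_in_W by blast
qed

lemma minus_one_in_stab: "- mat 1 \<in> stab"
proof -
  obtain c0 where "\<forall>v\<in>Hsp. \<rho> (- mat 1) v = vsmul c0 v"
    using proj_rep by (auto simp: proj_rep_def)
  then show ?thesis
    using stab_intro[OF minus_one_in_SU11] e1 e2 e1_in_W e2_in_W by (simp add: span2_vsmul)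
qed

end

section \<open>Representations with Arg = pi/2\<close>

locale Arg_pi_half_data = rep_isotropic_pair e1 e2 \<rho> for e1 e2 \<rho> +
  fixes c K :: complex and e :: "nat \<Rightarrow> complex"
  assumes fixes_e1: "\<And>l b. l > 0 \<Longrightarrow> fixes_pt (\<rho> (gmat l b)) e1"
    and fixes_e2: "\<And>l. l > 0 \<Longrightarrow> l \<noteq> 1 \<Longrightarrow> fixes_pt (\<rho> (gmat l 0)) e2"
    and c_unit: "cmod c = 1" and N_e1: "vsmul c (\<rho> (gmat 1 1) e1) = e1"
    and e: "e \<in> Hsp" "Bf e e1 = 0" "Bf e e2 = 0"
    and N_e2: "vsmul c (\<rho> (gmat 1 1) e2) = vadd (vadd (vsmul K e1) e2) e"
    and Arg_K: "Arg K = pi / 2"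
begin

lemma K_imaginary: "Re K = 0" "K \<noteq> 0"
proof -
  show "K \<noteq> 0"
    using Arg_K by (auto simp: Arg_zero)
  have "K = rcis (cmod K) (pi / 2)"
    using rcis_cmod_Arg[of K] Arg_K by simp
  then show "Re K = 0"
    by (metis Re_rcis cos_pi_half mult_zero_right)
qed

lemma e_eq_zero: "e = (\<lambda>n. 0)"
proof -
  have N: "in_UB (\<rho> (gmat 1 1))"
    by (simp add: rho_in_UB gmat_in_SU11)
  have "Bf (vsmul c (\<rho> (gmat 1 1) e2)) (vsmul c (\<rho> (gmat 1 1) e2)) = 0"
    using in_UB_Bf[OF N e2 e2] in_UB_Hsp[OF N e2] e2 B22 by simp
  moreover have "Bf e1 e = 0" "Bf e2 e = 0"
    using Bf_swap[OF e1 e(1)] Bf_swap[OF e2 e(1)] e by simp_all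
  ultimately have "K + cnj K + Bf e e = 0"
    using e1 e2 e B11 B12 B21 B22 by (simp add: N_e2 algebra_simps)
  then have "Bf e e = 0"
    using K_imaginary by (simp add: complex_add_cnj)
  then show ?thesis
    using isotropic_orthogonal_eq_zero e by blast
qed

lemma c_nonzero: "c \<noteq> 0"
  using c_unit by auto

lemma N_e1_coords: "\<rho> (gmat 1 1) e1 = vadd (vsmul (1/c) e1) (vsmul 0 e2)"
proof -
  have "\<rho> (gmat 1 1) e1 = vsmul (1/c) e1"
    using N_e1 vsmul_eq_iff[OF c_nonzero] by blast
  then show ?thesis
    by (simp add: vadd_def vsmul_def)
qed

lemma N_e2_coords: "\<rho> (gmat 1 1) e2 = vadd (vsmul (K/c) e1) (vsmul (1/c) e2)"
proof -
  have "\<rho> (gmat 1 1) e2 = vsmul (1/c) (vadd (vadd (vsmul K e1) e2) e)"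
    using N_e2 vsmul_eq_iff[OF c_nonzero] by blast
  then show ?thesis
    by (simp add: e_eq_zero vadd_def vsmul_def algebra_simps)
qed

lemma unipotent_one_in_stab: "gmat 1 1 \<in> stab"
  by (rule stab_intro) (simp_all add: gmat_in_SU11 N_e1_coords N_e2_coords in_span2)

lemma rho_diagonal_eigen:
  assumes "t > 0" "t \<noteq> 1"
  obtains m1 m2 where "\<rho> (gmat t 0) e1 = vsmul m1 e1" "\<rho> (gmat t 0) e2 = vsmul m2 e2"
    "m1 * cnj m2 = 1"
proof -
  obtain m1 m2 where m: "\<rho> (gmat t 0) e1 = vsmul m1 e1" "\<rho> (gmat t 0) e2 = vsmul m2 e2"
    using fixes_e1[of t 0] fixes_e2[of t] assms by (auto simp: fixes_pt_def)
  have "m1 * cnj m2 = Bf (\<rho> (gmat t 0) e1) (\<rho> (gmat t 0) e2)"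
    using e1 e2 B12 by (simp add: m)
  also have "\<dots> = 1"
    using in_UB_Bf[OF rho_in_UB e1 e2] B12 assms by (simp add: gmat_in_SU11)
  finally show ?thesis
    using that m by blast
qed

lemma diagonal_in_stab:
  assumes "t > 0"
  shows "gmat t 0 \<in> stab"
proof -
  have "gmat t 0 \<in> stab" if t: "t > 0" "t \<noteq> 1" for t
  proof -
    obtain m1 m2 where "\<rho> (gmat t 0) e1 = vsmul m1 e1" "\<rho> (gmat t 0) e2 = vsmul m2 e2"
      using rho_diagonal_eigen[OF t] by blast
    then show ?thesis
      using t e1_in_W e2_in_W by (intro stab_intro) (simp_all add: gmat_in_SU11 span2_vsmul)
  qed
  moreover have "gmat 1 0 = gmat 2 0 ** gmat (1/2) 0"
    by (simp add: gmat_mult)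
  ultimately show ?thesis
    using assms stab_mult by (cases "t = 1") auto
qed

text \<open>Conjugation by g(sqrt 2, 0) turns g(1,1) into g(1,2) = g(1,1)^2; comparing the
  \<eta>1-coordinates of both sides applied to \<eta>2 gives m1 = 2 m2, which is where K \<noteq> 0 is used.\<close>
lemma rho_diagonal_sqrt2_hyperbolic:
  obtains m1 m2 where "\<rho> (gmat (sqrt 2) 0) e1 = vsmul m1 e1" "\<rho> (gmat (sqrt 2) 0) e2 = vsmul m2 e2"
    "cmod m1 \<noteq> 1" "cmod m2 \<noteq> 1"
proof -
  define t where "t = sqrt (2::real)"
  have t: "t > 0" "t \<noteq> 1" "t \<noteq> 0" "2 / t = t"
    by (auto simp: t_def field_simps)
  let ?A = "\<rho> (gmat t 0)" and ?N = "\<rho> (gmat 1 1)"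
  obtain m1 m2 where A1: "?A e1 = vsmul m1 e1" and A2: "?A e2 = vsmul m2 e2"
    and m12: "m1 * cnj m2 = 1"
    using rho_diagonal_eigen[OF t(1,2)] by blast
  have in_SU11: "gmat t 0 \<in> SU11" "gmat 1 1 \<in> SU11" "gmat 1 2 \<in> SU11"
    using t by (simp_all add: gmat_in_SU11)
  have "gmat t 0 ** gmat 1 1 = gmat 1 2 ** gmat t 0"
    using t by (simp add: gmat_mult)
  then obtain k where k: "k \<noteq> 0" "\<And>v. v \<in> Hsp \<Longrightarrow> ?A (?N v) = vsmul k (\<rho> (gmat 1 2) (?A v))"
    using rho_mult_eq[OF in_SU11(1,2,3,1)] by blast
  obtain k' where k': "\<And>v. v \<in> Hsp \<Longrightarrow> \<rho> (gmat 1 2) v = vsmul k' (?N (?N v))"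
    using rho_mult[OF in_SU11(2,2)] by (auto simp: gmat_mult)
  have A_coords: "?A e1 = vadd (vsmul m1 e1) (vsmul 0 e2)" "?A e2 = vadd (vsmul 0 e1) (vsmul m2 e2)"
    by (simp_all add: A1 A2 vadd_def vsmul_def)
  have "?A (?N e2) = vadd (vsmul (K/c * m1) e1) (vsmul (1/c * m2) e2)"
    using Hsp_linear_combination[OF rho_Hsp_linear[OF in_SU11(1)] A_coords] by (simp add: N_e2_coords)
  moreover have "?A (?N e2) = vadd (vsmul (k * m2 * k' * (2 * K / c^2)) e1) (vsmul (k * m2 * k' / c^2) e2)"
  proof -
    have "?N (?N e2) = vadd (vsmul (2 * K / c^2) e1) (vsmul (1 / c^2) e2)"
      using Hsp_linear_combination[OF rho_Hsp_linear[OF in_SU11(2)] N_e1_coords N_e2_coords]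
      by (simp add: N_e2_coords power2_eq_square)
    moreover have "\<rho> (gmat 1 2) (?A e2) = vsmul m2 (\<rho> (gmat 1 2) e2)"
      using Hsp_linear_vsmul[OF rho_Hsp_linear[OF in_SU11(3)] e2] by (simp add: A2)
    ultimately show ?thesis
      using k(2)[OF e2] k'[OF e2] by (simp add: vsmul_vsmul vsmul_combination mult_ac)
  qed
  ultimately have coeff1: "K/c * m1 = k * m2 * k' * (2 * K / c^2)"
    and coeff2: "1/c * m2 = k * m2 * k' / c^2"
    by (simp_all add: combination_eq_iff)
  have "K/c * m1 = 2 * K * (k * m2 * k' / c^2)"
    using coeff1 by simp
  also have "\<dots> = 2 * K * (1/c * m2)"
    using coeff2 by simp
  finally have "K/c * m1 = K/c * (2 * m2)"
    by simp
  then have m1: "m1 = 2 * m2"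
    using K_imaginary(2) c_nonzero by simp
  have "2 * (m2 * cnj m2) = 1"
    using m12 by (simp add: m1 mult.assoc)
  then have "complex_of_real (2 * (cmod m2)\<^sup>2) = 1"
    by (simp only: of_real_mult of_real_numeral complex_norm_square)
  then have "2 * (cmod m2)\<^sup>2 = 1"
    by (simp only: of_real_eq_1_iff)
  then have "(cmod m2)\<^sup>2 = 1/2" "(cmod m1)\<^sup>2 = 2"
    by (simp_all add: m1 norm_mult power_mult_distrib)
  then have "cmod m1 \<noteq> 1" "cmod m2 \<noteq> 1"
    by auto
  then show ?thesis
    using that A1 A2 unfolding t_def by blast
qed

text \<open>The Weyl element conjugates g(1/sqrt 2, 0) into g(sqrt 2, 0), so it maps \<eta>1, \<eta>2 to
  isotropic eigenvectors of \<rho>(g(sqrt 2, 0)), and these lie in W by hyperbolicity.\<close>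
lemma weyl_in_stab: "weyl \<in> stab"
proof -
  define t where "t = sqrt (2::real)"
  have t: "t \<noteq> 0" "1/t > 0" "1/t \<noteq> 1"
    by (auto simp: t_def)
  obtain m1 m2 where A1: "\<rho> (gmat t 0) e1 = vsmul m1 e1" and A2: "\<rho> (gmat t 0) e2 = vsmul m2 e2"
    and hyperbolic: "cmod m1 \<noteq> 1" "cmod m2 \<noteq> 1"
    using rho_diagonal_sqrt2_hyperbolic unfolding t_def by blast
  have in_SU11: "gmat t 0 \<in> SU11" "weyl \<in> SU11" "gmat (1/t) 0 \<in> SU11"
    using t by (simp_all add: gmat_in_SU11 weyl_in_SU11)
  obtain k where k: "\<And>v. v \<in> Hsp \<Longrightarrow>
      \<rho> (gmat t 0) (\<rho> weyl v) = vsmul k (\<rho> weyl (\<rho> (gmat (1/t) 0) v))"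
    using rho_mult_eq[OF in_SU11(1,2,2,3) gmat_weyl_commute[OF t(1)]] by blast
  have "\<rho> weyl y \<in> W" if y: "y \<in> Hsp" "Bf y y = 0" "\<rho> (gmat (1/t) 0) y = vsmul n y" for y n
  proof (rule isotropic_eigenvector_in_W[OF rho_in_UB[OF in_SU11(1)] A1 A2 hyperbolic])
    show "\<rho> weyl y \<in> Hsp"
      using in_UB_Hsp[OF rho_in_UB[OF in_SU11(2)] y(1)] .
    show "\<rho> (gmat t 0) (\<rho> weyl y) = vsmul (k * n) (\<rho> weyl y)"
      using k[OF y(1)] Hsp_linear_vsmul[OF rho_Hsp_linear[OF in_SU11(2)] y(1)]
      by (simp add: y(3) vsmul_vsmul)
    show "Bf (\<rho> weyl y) (\<rho> weyl y) = 0"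
      using in_UB_Bf[OF rho_in_UB[OF in_SU11(2)] y(1) y(1)] y(2) by simp
  qed
  moreover obtain n1 n2 where "\<rho> (gmat (1/t) 0) e1 = vsmul n1 e1" "\<rho> (gmat (1/t) 0) e2 = vsmul n2 e2"
    using rho_diagonal_eigen[OF t(2,3)] by blast
  ultimately show ?thesis
    using stab_intro[OF in_SU11(2)] e1 e2 B11 B22 by blast
qed

lemma upper_triangular_in_stab:
  assumes "l > 0"
  shows "gmat l b \<in> stab"
proof -
  have positive: "gmat 1 x \<in> stab" if "x > 0" for x
  proof -
    have "gmat 1 x = gmat (sqrt x) 0 ** gmat 1 1 ** gmat (1 / sqrt x) 0"
      using that by (simp add: gmat_mult)
    then show ?thesis
      using that by (simp add: stab_mult diagonal_in_stab unipotent_one_in_stab)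
  qed
  have unipotent: "gmat 1 x \<in> stab" for x
  proof (cases "x > 0")
    case False
    have "gmat 1 (1 - x) ** gmat 1 x = gmat 1 1"
      by (simp add: gmat_mult)
    then show ?thesis
      using False positive[of "1 - x"] unipotent_one_in_stab
        stab_cancel[of "gmat 1 (1 - x)" "gmat 1 x"]
      by (simp add: gmat_in_SU11)
  qed (rule positive)
  have "gmat l b = gmat l 0 ** gmat 1 (b / l)"
    using assms by (simp add: gmat_mult)
  then show ?thesis
    using assms by (simp add: stab_mult diagonal_in_stab unipotent)
qed

lemma rho_image_W: "g \<in> SU11 \<Longrightarrow> \<rho> g ` W = W"
  using SU11_subset_generated[of stab] stab_mult upper_triangular_in_stab weyl_in_stab minus_one_in_stab
  by (auto simp: stab_def)

end

text \<open>Orbital continuity and non-elementarity are needed in the paper only to construct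
  \<eta>1 and \<eta>2, whose existence is part of the hypothesis on Arg(\<rho>).\<close>
theorem mainTheorem11:
  fixes \<rho> :: "complex^2^2 \<Rightarrow> (nat \<Rightarrow> complex) \<Rightarrow> (nat \<Rightarrow> complex)"
  assumes "proj_rep \<rho>"
    and "orbitally_continuous \<rho>"
    and "non_elementary \<rho>"
    and "Arg_is \<rho> (pi / 2)"
  shows "\<exists>W. cx_hyp_line W \<and> (\<forall>g\<in>SU11. \<rho> g ` W = W)"
proof -
  obtain \<eta>1 \<eta>2 c K e where "\<eta>1 \<in> Hsp" "\<eta>2 \<in> Hsp"
    "Bf \<eta>1 \<eta>1 = 0" "Bf \<eta>2 \<eta>2 = 0" "Bf \<eta>1 \<eta>2 = 1"
    "\<forall>l b. l > 0 \<longrightarrow> fixes_pt (\<rho> (gmat l b)) \<eta>1"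
    "\<forall>l. l > 0 \<and> l \<noteq> 1 \<longrightarrow> fixes_pt (\<rho> (gmat l 0)) \<eta>2"
    "cmod c = 1" "vsmul c (\<rho> (gmat 1 1) \<eta>1) = \<eta>1"
    "e \<in> Hsp" "Bf e \<eta>1 = 0" "Bf e \<eta>2 = 0"
    "vsmul c (\<rho> (gmat 1 1) \<eta>2) = vadd (vadd (vsmul K \<eta>1) \<eta>2) e"
    "Arg K = pi / 2"
    using assms(4) unfolding Arg_is_def by blast
  then interpret Arg_pi_half_data \<eta>1 \<eta>2 \<rho> c K e
    using assms(1) by unfold_locales auto
  show ?thesis
    using cx_hyp_line_W rho_image_W by blast
qed

end
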